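(* In the bandit exponential-weights setting described in the context, $$\Gamma_2:=(e-2)\eta\,\mathbb{E}\left[\sum_{t=1}^n\mathbb{E}_{a\sim q_t}\left[\langle\hat w_t,\Phi_m(a)\rangle^2\,\Big|\,\mathcal{F}_{t-1}\right]\right]\le\frac{(e-2)\mathcal{G}^4\eta mn}{1-\gamma}.$$
   Context: $\mathcal{A}\subset\mathbb{R}^d$ finite; $\mathcal{K}$ a kernel with feature map $\Phi$ and the adversary plays $w_t=\Phi(y_t)$ with $|\mathcal{K}(a,y_t)|\le\mathcal{G}^2$ for all $a\in\mathcal{A}$. $\Phi_m:\mathbb{R}^d\to\mathbb{R}^m$ is a feature map. In round $t$, $q_t$ is a distribution on $\mathcal{A}$ (measurable w.r.t. the past), $\gamma\in(0,1)$, $\nu$ a distribution on $\mathcal{A}$, $p_t=\gamma\nu+(1-\gamma)q_t$, the player draws $a_t\sim p_t$, $\Sigma_m^{(t)}=\mathbb{E}_{x\sim p_t}[\Phi_m(x)\Phi_m(x)^\top]$ is assumed invertible, and $\hat w_t=\mathcal{K}(a_t,y_t)(\Sigma_m^{(t)})^{-1}\Phi_m(a_t)$. $\eta>0$, and $\mathcal{F}_{t-1}$ is the sigma field generated by the history up to the end of round $t-1$ (and the adversary's choice $y_t$). *)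

theory Defs
  imports "HOL-Analysis.Analysis" "HOL-Probability.Probability"
begin

definition mix_pmf :: "real \<Rightarrow> 'a pmf \<Rightarrow> 'a pmf \<Rightarrow> 'a pmf" where
  "mix_pmf g nu q = bind_pmf (bernoulli_pmf g) (\<lambda>b. if b then nu else q)"

definition play_pmf :: "real \<Rightarrow> 'a pmf \<Rightarrow> ('a list \<Rightarrow> 'a pmf) \<Rightarrow> 'a list \<Rightarrow> 'a pmf" where
  "play_pmf g nu q h = mix_pmf g nu (q h)"

primrec hist :: "real \<Rightarrow> 'a pmf \<Rightarrow> ('a list \<Rightarrow> 'a pmf) \<Rightarrow> nat \<Rightarrow> 'a list pmf" where
  "hist g nu q 0 = return_pmf []"
| "hist g nu q (Suc t) =
     bind_pmf (hist g nu q t) (\<lambda>h. map_pmf (\<lambda>a. h @ [a]) (play_pmf g nu q h))"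

definition second_moment :: "('x \<Rightarrow> real^'m) \<Rightarrow> 'x pmf \<Rightarrow> real^'m^'m" where
  "second_moment Phim p =
     (\<chi> i j. measure_pmf.expectation p (\<lambda>x. Phim x $ i * Phim x $ j))"

definition west :: "('x \<Rightarrow> 'x \<Rightarrow> real) \<Rightarrow> ('x \<Rightarrow> real^'m) \<Rightarrow> 'x pmf \<Rightarrow> 'x \<Rightarrow> 'x \<Rightarrow> real^'m" where
  "west K Phim p y a = K a y *\<^sub>R (matrix_inv (second_moment Phim p) *v Phim a)"

text \<open>Past sigma-field F_{t-1} on the space of full histories of length n:
  generated by the first t-1 actions (the adversary's y_t and q_t are functions of these).\<close>
definition past_algebra :: "'a list measure \<Rightarrow> nat \<Rightarrow> 'a list measure" where
  "past_algebra M t = vimage_algebra (space M) (take (t - 1)) (count_space UNIV)"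

end

theory Submission imports Defs begin

(* Conditioned on the past, the action is drawn from p = gamma nu + (1 - gamma) q, so for a
   nonnegative integrand the expectation under q is at most 1/(1 - gamma) times the one under p.
   Under p the loss estimate w_hat = K(a,y) Sigma^-1 Phi_m(a) satisfies
   E_{b ~ p} <w_hat, Phi_m b>^2 = K(a,y)^2 Phi_m(a)^T Sigma^-1 Phi_m(a), and averaging over a ~ p
   gives the trace of Sigma^-1 Sigma, i.e. m. With K(a,y)^2 <= G^4 each round contributes at most
   G^4 m / (1 - gamma); the tower property removes the conditioning and n rounds sum up. *)

lemma set_pmf_mix_pmf: "set_pmf (mix_pmf g nu q) \<subseteq> set_pmf nu \<union> set_pmf q"
  unfolding mix_pmf_def by (auto split: if_splits)

lemma set_pmf_play_pmf_subset:
  "set_pmf (q h) \<subseteq> A \<Longrightarrow> set_pmf nu \<subseteq> A \<Longrightarrow> set_pmf (play_pmf g nu q h) \<subseteq> A"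
  using set_pmf_mix_pmf[of g nu "q h"] unfolding play_pmf_def by blast

lemma expectation_mix_pmf:
  fixes f :: "'a \<Rightarrow> real"
  assumes "finite (set_pmf nu)" "finite (set_pmf q)" "0 \<le> g" "g \<le> 1"
  shows "measure_pmf.expectation (mix_pmf g nu q) f
     = g * measure_pmf.expectation nu f + (1 - g) * measure_pmf.expectation q f"
  unfolding mix_pmf_def
  using assms by (subst pmf_expectation_bind[of UNIV]) (auto simp: UNIV_bool)

lemma expectation_le_mix_pmf:
  fixes f :: "'a \<Rightarrow> real"
  assumes "finite (set_pmf nu)" "finite (set_pmf q)" "0 \<le> g" "g < 1" "\<And>x. 0 \<le> f x"
  shows "measure_pmf.expectation q f \<le> measure_pmf.expectation (mix_pmf g nu q) f / (1 - g)"
proof -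
  have "0 \<le> measure_pmf.expectation nu f"
    using assms(5) by simp
  with assms show ?thesis
    by (simp add: expectation_mix_pmf field_simps)
qed

lemma
  assumes "invertible (S :: real^'n^'n)"
  shows matrix_inv_right: "S ** matrix_inv S = mat 1"
    and matrix_inv_left: "matrix_inv S ** S = mat 1"
  using someI_ex[OF assms[unfolded invertible_def]] unfolding matrix_inv_def by auto

lemma expectation_inner_square_eq_second_moment:
  fixes \<Phi>m :: "'x \<Rightarrow> real^'m"
  assumes "finite (set_pmf p)"
  shows "measure_pmf.expectation p (\<lambda>a. (u \<bullet> \<Phi>m a)\<^sup>2) = u \<bullet> (second_moment \<Phi>m p *v u)"
proof -
  have integrable: "integrable (measure_pmf p) f" for f :: "'x \<Rightarrow> real"
    using assms by (rule integrable_measure_pmf_finite)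
  have "u \<bullet> (second_moment \<Phi>m p *v u) =
     (\<Sum>i\<in>UNIV. \<Sum>j\<in>UNIV. measure_pmf.expectation p (\<lambda>a. u$i * (\<Phi>m a $ i * \<Phi>m a $ j) * u$j))"
    by (simp add: inner_vec_def matrix_vector_mult_def second_moment_def sum_distrib_left mult_ac)
  also have "\<dots> = measure_pmf.expectation p
      (\<lambda>a. \<Sum>i\<in>UNIV. \<Sum>j\<in>UNIV. u$i * (\<Phi>m a $ i * \<Phi>m a $ j) * u$j)"
    by (simp add: integrable integral_sum)
  also have "\<dots> = measure_pmf.expectation p (\<lambda>a. (u \<bullet> \<Phi>m a)\<^sup>2)"
    by (simp add: inner_vec_def power2_eq_square sum_product mult_ac)
  finally show ?thesis by simp
qed

lemma second_moment_quadratic_form_nonneg: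
  fixes \<Phi>m :: "'x \<Rightarrow> real^'m"
  assumes "finite (set_pmf p)"
  shows "0 \<le> u \<bullet> (second_moment \<Phi>m p *v u)"
  unfolding expectation_inner_square_eq_second_moment[OF assms, symmetric] by simp

lemma expectation_matrix_inv_second_moment_eq_dim:
  fixes \<Phi>m :: "'x \<Rightarrow> real^'m"
  assumes "finite (set_pmf p)" "invertible (second_moment \<Phi>m p)"
  shows "measure_pmf.expectation p (\<lambda>a. (matrix_inv (second_moment \<Phi>m p) *v \<Phi>m a) \<bullet> \<Phi>m a)
    = real CARD('m)"
proof -
  let ?S = "second_moment \<Phi>m p"
  let ?B = "matrix_inv ?S"
  have integrable: "integrable (measure_pmf p) f" for f :: "'x \<Rightarrow> real"
    using assms(1) by (rule integrable_measure_pmf_finite)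
  have "measure_pmf.expectation p (\<lambda>a. (?B *v \<Phi>m a) \<bullet> \<Phi>m a)
     = measure_pmf.expectation p (\<lambda>a. \<Sum>i\<in>UNIV. \<Sum>j\<in>UNIV. ?B$i$j * (\<Phi>m a $ j * \<Phi>m a $ i))"
    by (simp add: inner_vec_def matrix_vector_mult_def sum_distrib_left sum_distrib_right mult_ac)
  also have "\<dots> = (\<Sum>i\<in>UNIV. \<Sum>j\<in>UNIV. ?B$i$j * ?S$j$i)"
    by (simp add: integrable integral_sum second_moment_def)
  also have "\<dots> = (\<Sum>i\<in>UNIV. (?B ** ?S)$i$i)"
    by (simp add: matrix_matrix_mult_def)
  also have "\<dots> = real CARD('m)"
    using matrix_inv_left[OF assms(2)] by (simp add: mat_def)
  finally show ?thesis .
qed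

lemma expectation_west_inner_square:
  fixes \<Phi>m :: "'x \<Rightarrow> real^'m" and K :: "'x \<Rightarrow> 'x \<Rightarrow> real"
  assumes "finite (set_pmf p)" "invertible (second_moment \<Phi>m p)"
  shows "measure_pmf.expectation p (\<lambda>a. (west K \<Phi>m p y act \<bullet> \<Phi>m a)\<^sup>2)
    = (K act y)\<^sup>2 * ((matrix_inv (second_moment \<Phi>m p) *v \<Phi>m act) \<bullet> \<Phi>m act)"
proof -
  let ?S = "second_moment \<Phi>m p"
  have "?S *v (matrix_inv ?S *v v) = v" for v
    using matrix_inv_right[OF assms(2)] by (simp add: matrix_vector_mul_assoc)
  then show ?thesis
    unfolding expectation_inner_square_eq_second_moment[OF assms(1)] west_def
    by (simp add: matrix_vector_mult_scaleR power2_eq_square inner_commute)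
qed

lemma matrix_inv_second_moment_quadratic_form_nonneg:
  fixes \<Phi>m :: "'x \<Rightarrow> real^'m"
  assumes "finite (set_pmf p)" "invertible (second_moment \<Phi>m p)"
  shows "0 \<le> (matrix_inv (second_moment \<Phi>m p) *v v) \<bullet> v"
proof -
  let ?S = "second_moment \<Phi>m p"
  let ?u = "matrix_inv ?S *v v"
  have "?S *v ?u = v"
    using matrix_inv_right[OF assms(2)] by (simp add: matrix_vector_mul_assoc)
  then show ?thesis
    using second_moment_quadratic_form_nonneg[OF assms(1), of ?u \<Phi>m] by (simp add: inner_commute)
qed

lemma expectation_west_inner_square_le:
  fixes \<Phi>m :: "'x \<Rightarrow> real^'m" and K :: "'x \<Rightarrow> 'x \<Rightarrow> real"
    and \<nu> q :: "'x pmf" and \<gamma> :: real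
  defines "p \<equiv> mix_pmf \<gamma> \<nu> q"
  assumes fin: "finite (set_pmf \<nu>)" "finite (set_pmf q)"
    and gamma: "0 \<le> \<gamma>" "\<gamma> < 1"
    and bounded: "\<And>a. a \<in> set_pmf p \<Longrightarrow> \<bar>K a y\<bar> \<le> G\<^sup>2"
    and inv: "invertible (second_moment \<Phi>m p)"
  shows "measure_pmf.expectation p
      (\<lambda>act. measure_pmf.expectation q (\<lambda>a. (west K \<Phi>m p y act \<bullet> \<Phi>m a)\<^sup>2))
    \<le> G ^ 4 * real CARD('m) / (1 - \<gamma>)"
proof -
  let ?Q = "\<lambda>act. (matrix_inv (second_moment \<Phi>m p) *v \<Phi>m act) \<bullet> \<Phi>m act"
  have finp: "finite (set_pmf p)"
    using fin set_pmf_mix_pmf[of \<gamma> \<nu> q] unfolding p_def by (blast intro: finite_subset)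
  have pointwise: "measure_pmf.expectation q (\<lambda>a. (west K \<Phi>m p y act \<bullet> \<Phi>m a)\<^sup>2)
      \<le> G ^ 4 / (1 - \<gamma>) * ?Q act" if "act \<in> set_pmf p" for act
  proof -
    have "\<bar>K act y\<bar>\<^sup>2 \<le> (G\<^sup>2)\<^sup>2"
      using bounded[OF that] by (intro power_mono) auto
    then have K_bound: "(K act y)\<^sup>2 * ?Q act \<le> G ^ 4 * ?Q act"
      using matrix_inv_second_moment_quadratic_form_nonneg[OF finp inv]
      by (intro mult_right_mono) auto
    have "measure_pmf.expectation q (\<lambda>a. (west K \<Phi>m p y act \<bullet> \<Phi>m a)\<^sup>2)
        \<le> measure_pmf.expectation p (\<lambda>a. (west K \<Phi>m p y act \<bullet> \<Phi>m a)\<^sup>2) / (1 - \<gamma>)"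
      unfolding p_def by (rule expectation_le_mix_pmf[OF fin gamma]) simp
    also have "\<dots> = (K act y)\<^sup>2 * ?Q act / (1 - \<gamma>)"
      by (simp add: expectation_west_inner_square[OF finp inv])
    also have "\<dots> \<le> G ^ 4 * ?Q act / (1 - \<gamma>)"
      using K_bound gamma by (intro divide_right_mono) auto
    finally show ?thesis by simp
  qed
  have "measure_pmf.expectation p
      (\<lambda>act. measure_pmf.expectation q (\<lambda>a. (west K \<Phi>m p y act \<bullet> \<Phi>m a)\<^sup>2))
      \<le> measure_pmf.expectation p (\<lambda>act. G ^ 4 / (1 - \<gamma>) * ?Q act)"
    using finp pointwise
    by (intro integral_mono_AE integrable_measure_pmf_finite) (auto simp: AE_measure_pmf_iff)
  also have "\<dots> = G ^ 4 / (1 - \<gamma>) * real CARD('m)"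
    using expectation_matrix_inv_second_moment_eq_dim[OF finp inv] by simp
  finally show ?thesis by simp
qed

lemma expectation_bind_pmf_le:
  fixes h :: "'b \<Rightarrow> real"
  assumes "finite (set_pmf p)" "\<And>x. x \<in> set_pmf p \<Longrightarrow> finite (set_pmf (f x))"
    and "\<And>x. x \<in> set_pmf p \<Longrightarrow> measure_pmf.expectation (f x) h \<le> C"
  shows "measure_pmf.expectation (bind_pmf p f) h \<le> C"
proof -
  have "measure_pmf.expectation (bind_pmf p f) h
      = (\<Sum>x\<in>set_pmf p. pmf p x * measure_pmf.expectation (f x) h)"
    using assms(1,2) by (subst pmf_expectation_bind[of "set_pmf p"]) auto
  also have "\<dots> \<le> (\<Sum>x\<in>set_pmf p. pmf p x * C)"
    using assms(3) by (intro sum_mono mult_left_mono) auto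
  also have "\<dots> = C"
    using sum_pmf_eq_1[OF assms(1) order_refl] by (simp add: sum_distrib_right[symmetric])
  finally show ?thesis .
qed

lemma length_set_pmf_hist: "xs \<in> set_pmf (hist g nu q k) \<Longrightarrow> length xs = k"
  by (induction k arbitrary: xs) auto

lemma finite_set_pmf_hist:
  assumes "\<And>h. finite (set_pmf (play_pmf g nu q h))"
  shows "finite (set_pmf (hist g nu q k))"
  using assms by (induction k) auto

lemma map_pmf_take_hist: "j \<le> k \<Longrightarrow> map_pmf (take j) (hist g nu q k) = hist g nu q j"
proof (induction k)
  case 0
  then show ?case by simp
next
  case (Suc k)
  show ?case
  proof (cases "j = Suc k")
    case True
    then have "map_pmf (take j) (hist g nu q (Suc k)) = map_pmf id (hist g nu q (Suc k))"
      using length_set_pmf_hist by (intro map_pmf_cong) fastforce+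
    then show ?thesis using True by simp
  next
    case False
    then have "j \<le> k" using Suc.prems by simp
    have "map_pmf (take j) (hist g nu q (Suc k)) =
       bind_pmf (hist g nu q k) (\<lambda>h. map_pmf (\<lambda>a. take j (h @ [a])) (play_pmf g nu q h))"
      by (simp add: map_bind_pmf pmf.map_comp o_def)
    also have "\<dots> = bind_pmf (hist g nu q k) (\<lambda>h. map_pmf (\<lambda>a. take j h) (play_pmf g nu q h))"
      using length_set_pmf_hist \<open>j \<le> k\<close> by (intro bind_pmf_cong refl map_pmf_cong) fastforce+
    also have "\<dots> = map_pmf (take j) (hist g nu q k)"
      by (simp add: map_pmf_def)
    finally show ?thesis using Suc.IH \<open>j \<le> k\<close> by simp
  qed
qed

lemma expectation_hist_round_le:
  fixes F :: "'a list \<Rightarrow> 'a \<Rightarrow> real"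
  assumes fin: "\<And>h. finite (set_pmf (play_pmf g nu q h))" and "k < n"
    and round: "\<And>h. h \<in> set_pmf (hist g nu q k) \<Longrightarrow>
      measure_pmf.expectation (play_pmf g nu q h) (F h) \<le> C"
  shows "measure_pmf.expectation (hist g nu q n) (\<lambda>h. F (take k h) (h ! k)) \<le> C"
proof -
  let ?G = "\<lambda>h. F (take k h) (h ! k)"
  have "measure_pmf.expectation (hist g nu q n) ?G
      = measure_pmf.expectation (hist g nu q n) (\<lambda>h. ?G (take (Suc k) h))"
    using length_set_pmf_hist \<open>k < n\<close>
    by (intro integral_cong_AE) (auto simp: AE_measure_pmf_iff min_def)
  also have "\<dots> = measure_pmf.expectation (map_pmf (take (Suc k)) (hist g nu q n)) ?G"
    by simp
  also have "\<dots> = measure_pmf.expectation (hist g nu q (Suc k)) ?G"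
    using \<open>k < n\<close> by (simp add: map_pmf_take_hist)
  also have "\<dots> \<le> C"
    unfolding hist.simps
  proof (rule expectation_bind_pmf_le)
    show "finite (set_pmf (hist g nu q k))"
      by (rule finite_set_pmf_hist[OF fin])
    fix h assume h: "h \<in> set_pmf (hist g nu q k)"
    show "finite (set_pmf (map_pmf (\<lambda>a. h @ [a]) (play_pmf g nu q h)))"
      using fin by simp
    have "length h = k" using h by (rule length_set_pmf_hist)
    then show "measure_pmf.expectation (map_pmf (\<lambda>a. h @ [a]) (play_pmf g nu q h)) ?G \<le> C"
      using round[OF h] by (simp add: nth_append)
  qed
  finally show ?thesis .
qed

lemma expectation_real_cond_exp_past_algebra:
  assumes "integrable (measure_pmf M) f"
  shows "measure_pmf.expectation M (real_cond_exp (measure_pmf M) (past_algebra (measure_pmf M) t) f)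
    = measure_pmf.expectation M f"
proof -
  have "finite_measure_subalgebra (measure_pmf M) (past_algebra (measure_pmf M) t)"
    unfolding finite_measure_subalgebra_def finite_measure_subalgebra_axioms_def subalgebra_def
    by (auto simp: past_algebra_def intro: prob_space.finite_measure prob_space_measure_pmf)
  then show ?thesis
    by (intro sigma_finite_subalgebra.real_cond_exp_int(2) finite_measure_subalgebra_is_sigma_finite
        assms)
qed

lemma expectation_hist_west_inner_square_le:
  fixes \<Phi>m :: "'x \<Rightarrow> real^'m" and K :: "'x \<Rightarrow> 'x \<Rightarrow> real"
  assumes "finite A"
    and bounded: "\<And>h a. a \<in> A \<Longrightarrow> \<bar>K a (y h)\<bar> \<le> G\<^sup>2"
    and q_supp: "\<And>h. set_pmf (q h) \<subseteq> A"
    and nu_supp: "set_pmf \<nu> \<subseteq> A"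
    and gamma: "0 \<le> \<gamma>" "\<gamma> < 1"
    and inv: "\<And>h. invertible (second_moment \<Phi>m (play_pmf \<gamma> \<nu> q h))"
    and "k < n"
  shows "measure_pmf.expectation (hist \<gamma> \<nu> q n)
      (\<lambda>h. let past = take k h; act = h ! k in
         measure_pmf.expectation (q past)
           (\<lambda>a. (west K \<Phi>m (play_pmf \<gamma> \<nu> q past) (y past) act \<bullet> \<Phi>m a)\<^sup>2))
    \<le> G ^ 4 * real CARD('m) / (1 - \<gamma>)"
proof -
  have supp_play: "set_pmf (play_pmf \<gamma> \<nu> q h) \<subseteq> A" for h
    using q_supp nu_supp by (rule set_pmf_play_pmf_subset)
  have fin_q: "finite (set_pmf (q h))" and fin_nu: "finite (set_pmf \<nu>)"
    and fin_play: "finite (set_pmf (play_pmf \<gamma> \<nu> q h))" for h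
    using finite_subset[OF q_supp] finite_subset[OF nu_supp] finite_subset[OF supp_play]
      \<open>finite A\<close> by auto
  show ?thesis
    unfolding Let_def
  proof (rule expectation_hist_round_le[OF fin_play \<open>k < n\<close>])
    fix h
    have "\<bar>K a (y h)\<bar> \<le> G\<^sup>2" if "a \<in> set_pmf (play_pmf \<gamma> \<nu> q h)" for a
      using that supp_play bounded by blast
    then show "measure_pmf.expectation (play_pmf \<gamma> \<nu> q h) (\<lambda>act. measure_pmf.expectation (q h)
        (\<lambda>a. (west K \<Phi>m (play_pmf \<gamma> \<nu> q h) (y h) act \<bullet> \<Phi>m a)\<^sup>2))
      \<le> G ^ 4 * real CARD('m) / (1 - \<gamma>)"
      using gamma inv[of h] unfolding play_pmf_def
      by (intro expectation_west_inner_square_le fin_q fin_nu) auto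
  qed
qed

theorem lemma5:
  fixes A :: "(real^'d) set"
    and K :: "real^'d \<Rightarrow> real^'d \<Rightarrow> real"
    and \<Phi> :: "real^'d \<Rightarrow> 'h::real_inner"
    and \<Phi>m :: "real^'d \<Rightarrow> real^'m"
    and y :: "(real^'d) list \<Rightarrow> real^'d"
    and q :: "(real^'d) list \<Rightarrow> (real^'d) pmf"
    and \<nu> :: "(real^'d) pmf"
    and \<gamma> \<eta> G :: real and n :: nat
  assumes "finite A"
    and kernel: "\<And>x z. K x z = \<Phi> x \<bullet> \<Phi> z"
    and bounded: "\<And>h a. a \<in> A \<Longrightarrow> \<bar>K a (y h)\<bar> \<le> G\<^sup>2"
    and q_supp: "\<And>h. set_pmf (q h) \<subseteq> A"
    and nu_supp: "set_pmf \<nu> \<subseteq> A"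
    and gamma: "0 < \<gamma>" "\<gamma> < 1"
    and eta: "\<eta> > 0"
    and inv: "\<And>h. invertible (second_moment \<Phi>m (play_pmf \<gamma> \<nu> q h))"
  shows "(exp 1 - 2) * \<eta> *
      measure_pmf.expectation (hist \<gamma> \<nu> q n)
        (\<lambda>h. \<Sum>t\<in>{1..n}.
           real_cond_exp (measure_pmf (hist \<gamma> \<nu> q n))
             (past_algebra (measure_pmf (hist \<gamma> \<nu> q n)) t)
             (\<lambda>h'. let past = take (t - 1) h'; act = h' ! (t - 1) in
                measure_pmf.expectation (q past)
                  (\<lambda>a. (west K \<Phi>m (play_pmf \<gamma> \<nu> q past) (y past) act \<bullet> \<Phi>m a)\<^sup>2)) h)
    \<le> (exp 1 - 2) * G ^ 4 * \<eta> * real CARD('m) * real n / (1 - \<gamma>)"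
proof -
  let ?M = "hist \<gamma> \<nu> q n"
  let ?C = "G ^ 4 * real CARD('m) / (1 - \<gamma>)"
  define F where "F t = (\<lambda>h'. let past = take (t - 1) h'; act = h' ! (t - 1) in
    measure_pmf.expectation (q past)
      (\<lambda>a. (west K \<Phi>m (play_pmf \<gamma> \<nu> q past) (y past) act \<bullet> \<Phi>m a)\<^sup>2))" for t
  have "finite (set_pmf (play_pmf \<gamma> \<nu> q h))" for h
    using set_pmf_play_pmf_subset[OF q_supp nu_supp] \<open>finite A\<close> by (rule finite_subset)
  then have integrable: "integrable (measure_pmf ?M) f" for f :: "_ \<Rightarrow> real"
    by (intro integrable_measure_pmf_finite finite_set_pmf_hist)
  have "measure_pmf.expectation ?M
      (\<lambda>h. \<Sum>t\<in>{1..n}. real_cond_exp (measure_pmf ?M) (past_algebra (measure_pmf ?M) t) (F t) h)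
      = (\<Sum>t\<in>{1..n}. measure_pmf.expectation ?M (F t))"
    by (simp add: integral_sum integrable expectation_real_cond_exp_past_algebra)
  also have "\<dots> \<le> (\<Sum>t\<in>{1..n}. ?C)"
    unfolding F_def using assms
    by (intro sum_mono expectation_hist_west_inner_square_le[where A = A]) auto
  also have "\<dots> = real n * ?C"
    by simp
  finally have "(exp 1 - 2) * \<eta> * measure_pmf.expectation ?M
      (\<lambda>h. \<Sum>t\<in>{1..n}. real_cond_exp (measure_pmf ?M) (past_algebra (measure_pmf ?M) t) (F t) h)
      \<le> (exp 1 - 2) * \<eta> * (real n * ?C)"
    using eta exp_ge_add_one_self[of 1] by (intro mult_left_mono) auto
  also have "\<dots> = (exp 1 - 2) * G ^ 4 * \<eta> * real CARD('m) * real n / (1 - \<gamma>)"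
    by (simp add: mult_ac)
  finally show ?thesis
    unfolding F_def .
qed

end
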